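(* In the generic model, for $a\in\mathbb R$ let $\mathcal P_a:=\mathrm{ev}_a\circ\mathcal P\colon H_R\to\mathbb R$. Then for all $a,b\in\mathbb R$, $$\mathcal P_a\star\mathcal P_b=\mathcal P_{a+b},$$ i.e. $\sum_w\mathcal P(w_1)(a)\,\mathcal P(w_2)(b)=\mathcal P(w)(a+b)$ for every $w\in H_R$.
   Context: Generic model: $f\colon[0,\infty)\to\mathbb R$ continuous with $f(\zeta)-c/\zeta=O(\zeta^{-1-\epsilon})$ at infinity; Mellin transform $F(z)=\int_0^\infty f(\zeta)\zeta^{-z}d\zeta$, meromorphic near $0$. $H_R$: Connes–Kreimer Hopf algebra of rooted trees with coproduct $\Delta w=\sum_w w_1\otimes w_2$ (determined by $\Delta\circ B_+=B_+\otimes\mathbb 1+(\mathrm{id}\otimes B_+)\circ\Delta$), antipode $S$. $\phi_s(w)=s^{-z|w|}\prod_{v}F(z|w_v|)$ multiplicative; $\phi_{R,s}=\phi_\mu^{\star-1}\star\phi_s$ for fixed $\mu>0$; $\mathcal P(w)\in\mathbb R[x]$ is the polynomial with $\lim_{z\to0}\phi_{R,s}(w)=\mathcal P(w)(\ln\frac s\mu)$. Convolution of functionals: $\alpha\star\beta=m\circ(\alpha\otimes\beta)\circ\Delta$. *)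

theory Defs
  imports "HOL-Analysis.Analysis" "HOL-Library.Multiset" "HOL-Library.Poly_Mapping"
    "HOL-Computational_Algebra.Polynomial"
begin

datatype rtree = Node "rtree multiset"   \<comment> \<open>Node ts = B_+ of the forest ts\<close>

type_synonym forest = "rtree multiset"    \<comment> \<open>forests = monomials, basis of H_R; {#} is the unit 1\<close>

primrec nverts :: "rtree \<Rightarrow> nat" where
  "nverts (Node ts) = Suc (sum_mset (image_mset nverts ts))"

primrec subsizes :: "rtree \<Rightarrow> nat multiset" where
  "subsizes (Node ts) =
     add_mset (Suc (sum_mset (image_mset nverts ts))) (sum_mset (image_mset subsizes ts))"

definition fsize :: "forest \<Rightarrow> nat" where
  "fsize w = sum_mset (image_mset nverts w)"

definition fsubsizes :: "forest \<Rightarrow> nat multiset" where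
  "fsubsizes w = sum_mset (image_mset subsizes w)"

section \<open>Connes--Kreimer coproduct (Sweedler sum as a multiset of pairs)\<close>

definition pmul :: "(forest \<times> forest) multiset \<Rightarrow> (forest \<times> forest) multiset
                     \<Rightarrow> (forest \<times> forest) multiset" where
  "pmul A B = sum_mset (image_mset (\<lambda>(a1, b1). image_mset (\<lambda>(a2, b2). (a1 + a2, b1 + b2)) B) A)"

definition fprod :: "(forest \<times> forest) multiset multiset \<Rightarrow> (forest \<times> forest) multiset" where
  "fprod M = fold_mset pmul {#({#}, {#})#} M"

primrec cop_tree :: "rtree \<Rightarrow> (forest \<times> forest) multiset" where
  "cop_tree (Node ts) =
     add_mset ({#Node ts#}, {#})
       (image_mset (\<lambda>(a, b). (a, {#Node b#})) (fprod (image_mset cop_tree ts)))"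

definition cop :: "forest \<Rightarrow> (forest \<times> forest) multiset" where
  "cop w = fprod (image_mset cop_tree w)"

section \<open>Linear functionals (given by their values on the basis of forests)\<close>

definition conv :: "(forest \<Rightarrow> 'a::comm_semiring_1) \<Rightarrow> (forest \<Rightarrow> 'a) \<Rightarrow> forest \<Rightarrow> 'a" where
  "conv \<alpha> \<beta> w = sum_mset (image_mset (\<lambda>(w1, w2). \<alpha> w1 * \<beta> w2) (cop w))"

definition counit :: "forest \<Rightarrow> 'a::comm_semiring_1" where
  "counit w = (if w = {#} then 1 else 0)"

definition conv_inv :: "(forest \<Rightarrow> 'a::comm_ring_1) \<Rightarrow> forest \<Rightarrow> 'a" where
  "conv_inv \<phi> = (THE \<psi>. conv \<psi> \<phi> = counit)"

text \<open>linear extension of a functional to H_R (finite real linear combinations of forests)\<close>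
definition lin :: "(forest \<Rightarrow> real) \<Rightarrow> (forest \<Rightarrow>\<^sub>0 real) \<Rightarrow> real" where
  "lin \<alpha> w = (\<Sum>v\<in>Poly_Mapping.keys w. Poly_Mapping.lookup w v * \<alpha> v)"

definition generic_model :: "(real \<Rightarrow> real) \<Rightarrow> (complex \<Rightarrow> complex) \<Rightarrow> bool" where
  "generic_model f F \<longleftrightarrow>
     continuous_on {0..} f \<and>
     (\<exists>c \<epsilon>::real. \<epsilon> > 0 \<and> (\<lambda>\<zeta>. f \<zeta> - c / \<zeta>) \<in> O[at_top](\<lambda>\<zeta>. \<zeta> powr (-1 - \<epsilon>))) \<and>
     (\<exists>r>0. F holomorphic_on (ball 0 r - {0}) \<and>
        (\<forall>z\<in>ball 0 r. 0 < Re z \<and> Re z < 1 \<longrightarrow>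
            F z = (LINT \<zeta>:{0<..}|lborel. complex_of_real (f \<zeta>) * complex_of_real \<zeta> powr (- z))) \<and>
        (\<exists>(n::nat) g. g holomorphic_on ball 0 r \<and> (\<forall>z\<in>ball 0 r - {0}. g z = z ^ n * F z)))"

definition phi :: "(complex \<Rightarrow> complex) \<Rightarrow> real \<Rightarrow> complex \<Rightarrow> forest \<Rightarrow> complex" where
  "phi F s z w = exp (- z * of_nat (fsize w) * complex_of_real (ln s)) *
                 prod_mset (image_mset (\<lambda>k. F (z * of_nat k)) (fsubsizes w))"

definition phiR :: "(complex \<Rightarrow> complex) \<Rightarrow> real \<Rightarrow> real \<Rightarrow> complex \<Rightarrow> forest \<Rightarrow> complex" where
  "phiR F \<mu> s z = conv (conv_inv (phi F \<mu> z)) (phi F s z)"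

end

theory Submission
  imports Defs
begin

text \<open>
  Write \<open>\<phi>\<^sub>t\<close> for \<open>\<phi>\<^bsub>\<mu> e\<^sup>t\<^esub>\<close>.  Since \<open>\<phi>\<^sub>s(w)\<close> depends on \<open>s\<close> only through the
  factor \<open>s\<^sup>-\<^sup>z\<^sup>|\<^sup>w\<^sup>|\<close>, we have \<open>\<phi>\<^sub>t = \<theta>\<^sub>t \<phi>\<^sub>0\<close>, where the twist \<open>\<theta>\<^sub>t \<psi> (w) = e\<^sup>-\<^sup>z\<^sup>t\<^sup>|\<^sup>w\<^sup>| \<psi>(w)\<close>
  is an automorphism of the convolution algebra, because the coproduct preserves the
  number of vertices.  Hence \<open>\<theta>\<^sub>a \<phi>\<^sub>R\<^sub>,\<^sub>b = (\<theta>\<^sub>a \<phi>\<^sub>0)\<^sup>-\<^sup>1 \<star> \<phi>\<^sub>a\<^sub>+\<^sub>b\<close> and so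
  \<open>\<phi>\<^sub>R\<^sub>,\<^sub>a \<star> \<theta>\<^sub>a \<phi>\<^sub>R\<^sub>,\<^sub>b = \<phi>\<^sub>R\<^sub>,\<^sub>a\<^sub>+\<^sub>b\<close> for every \<open>z\<close>.  Letting \<open>z \<rightarrow> 0\<close>, the twist tends to the
  identity and the three renormalized characters tend to \<open>\<P>\<^sub>a\<close>, \<open>\<P>\<^sub>b\<close>, \<open>\<P>\<^sub>a\<^sub>+\<^sub>b\<close>.
  Only the existence of the limits \<open>\<P>\<close> enters; the analytic hypotheses of the generic
  model merely guarantee it.
\<close>

lemma image_mset_sum_mset: "image_mset g (\<Sum>x\<in>#M. f x) = (\<Sum>x\<in>#M. image_mset g (f x))"
  by (induction M) auto

lemma sum_mset_add_mset: "(\<Sum>x\<in>#M. add_mset (f x) (g x)) = image_mset f M + (\<Sum>x\<in>#M. g x)"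
  by (induction M) auto

lemma sum_mset_bind: "(\<Sum>x\<in>#(\<Sum>y\<in>#M. h y). f x) = (\<Sum>y\<in>#M. \<Sum>x\<in>#h y. f x)"
  by (induction M) auto

lemma sum_mset_filter_split:
  "(\<Sum>x\<in>#M. f x) = (\<Sum>x\<in>#filter_mset P M. f x) + (\<Sum>x\<in>#filter_mset (\<lambda>x. \<not> P x) M. f x)"
  by (induction M) (auto simp: ac_simps)

section \<open>Minkowski sums of multisets\<close>

text \<open>The Minkowski sum \<open>{#a + b. a \<in># A, b \<in># B#}\<close>; on multisets of pairs of forests
  it is the product of Sweedler sums, so \<open>\<Delta>\<close> is multiplicative with respect to it.\<close>
definition msum :: "'a::comm_monoid_add multiset \<Rightarrow> 'a multiset \<Rightarrow> 'a multiset" where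
  "msum A B = (\<Sum>a\<in>#A. image_mset ((+) a) B)"

lemma msum_empty_left [simp]: "msum {#} B = {#}"
  by (simp add: msum_def)

lemma msum_add_mset_left [simp]: "msum (add_mset a A) B = image_mset ((+) a) B + msum A B"
  by (simp add: msum_def)

lemma msum_union_left [simp]: "msum (A + A') B = msum A B + msum A' B"
  by (simp add: msum_def)

lemma msum_empty_right [simp]: "msum A {#} = {#}"
  by (induction A) auto

lemma msum_add_mset_right [simp]: "msum A (add_mset b B) = image_mset (\<lambda>a. a + b) A + msum A B"
  by (induction A) (auto simp: add.commute)

lemma msum_union_right [simp]: "msum A (B + B') = msum A B + msum A B'"
  by (induction A) (auto simp: ac_simps)

lemma msum_commute: "msum A B = msum B A"
  by (induction A) (auto simp: add.commute)

lemma image_mset_plus_zero [simp]: "image_mset ((+) (0::'a::comm_monoid_add)) M = M"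
  by (induction M) auto

lemma msum_image_shift: "msum (image_mset ((+) a) B) C = image_mset ((+) a) (msum B C)"
  by (induction B) (auto simp: ac_simps image_mset.compositionality o_def intro!: image_mset_cong)

lemma msum_assoc: "msum (msum A B) C = msum A (msum B C)"
  by (induction A) (auto simp: msum_image_shift)

lemma msum_left_commute: "msum A (msum B C) = msum B (msum A C)"
  by (metis msum_assoc msum_commute)

lemma mem_msumE:
  assumes "x \<in># msum A B"
  obtains a b where "a \<in># A" "b \<in># B" "x = a + b"
  using assms by (induction A) auto

lemma image_msum:
  assumes "\<And>x y. k (x + y) = g x + h y"
  shows "image_mset k (msum A B) = msum (image_mset g A) (image_mset h B)"
  by (induction A) (auto simp: assms image_mset.compositionality o_def)

lemma bind_msum:
  assumes "\<And>x y. h (x + y) = msum (h x) (h y)"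
  shows "(\<Sum>x\<in>#msum A B. h x) = msum (\<Sum>x\<in>#A. h x) (\<Sum>x\<in>#B. h x)"
proof (induction A)
  case empty
  then show ?case by simp
next
  case (add a A)
  have "(\<Sum>b\<in>#B. msum (h a) (h b)) = msum (h a) (\<Sum>b\<in>#B. h b)"
    by (induction B) simp_all
  then show ?case using add by (simp add: assms image_mset.compositionality o_def)
qed

lemma filter_msum:
  assumes "\<And>x y. P (x + y) \<longleftrightarrow> P x \<and> P y"
  shows "filter_mset P (msum A B) = msum (filter_mset P A) (filter_mset P B)"
proof (induction A)
  case empty
  then show ?case by simp
next
  case (add a A)
  have "filter_mset P (image_mset ((+) a) B) =
      (if P a then image_mset ((+) a) (filter_mset P B) else {#})"
    by (induction B) (auto simp: assms)
  then show ?case using add by simp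
qed

section \<open>The coproduct\<close>

lemma pmul_eq_msum: "pmul A B = msum A B"
  unfolding pmul_def msum_def
  by (intro arg_cong[where f = sum_mset] image_mset_cong) (auto intro!: image_mset_cong)

lemma fprod_empty [simp]: "fprod {#} = {#0#}"
  by (simp add: fprod_def zero_prod_def)

lemma fprod_add_mset [simp]: "fprod (add_mset x M) = msum x (fprod M)"
proof -
  interpret comp_fun_commute pmul
    by unfold_locales (simp add: fun_eq_iff pmul_eq_msum msum_left_commute)
  show ?thesis
    by (simp add: fprod_def pmul_eq_msum)
qed

text \<open>\<open>\<Delta>\<close> is multiplicative, with \<open>\<Delta> 1 = 1 \<otimes> 1\<close> (note \<open>0 = ({#}, {#})\<close> on pairs).\<close>
lemma cop_empty [simp]: "cop {#} = {#0#}"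
  by (simp add: cop_def)

lemma cop_union: "cop (w + v) = msum (cop w) (cop v)"
  by (induction w) (simp_all add: cop_def msum_assoc)

lemma cop_Node:
  "cop {#Node ts#} =
     add_mset ({#Node ts#}, {#}) (image_mset (\<lambda>x. (fst x, {#Node (snd x)#})) (cop ts))"
  by (simp add: cop_def cop_tree.simps case_prod_beta')

declare cop_tree.simps [simp del]

lemma forest_induct [case_names empty union node]:
  assumes Q_empty: "Q {#}"
    and Q_union: "\<And>w v. Q w \<Longrightarrow> Q v \<Longrightarrow> Q (w + v)"
    and Q_node: "\<And>ts. Q ts \<Longrightarrow> Q {#Node ts#}"
  shows "Q w"
proof -
  have from_trees: "Q w" if "\<And>t. t \<in># w \<Longrightarrow> Q {#t#}" for w
    using that
  proof (induction w)
    case empty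
    show ?case by (rule Q_empty)
  next
    case (add t w)
    then show ?case using Q_union[of "{#t#}" w] by simp
  qed
  have trees: "Q {#t#}" for t
    by (induction t) (auto intro: Q_node from_trees)
  show ?thesis
    by (rule from_trees) (rule trees)
qed

lemma fsize_empty [simp]: "fsize {#} = 0"
  by (simp add: fsize_def)

lemma fsize_add_mset [simp]: "fsize (add_mset t w) = nverts t + fsize w"
  by (simp add: fsize_def)

lemma fsize_union [simp]: "fsize (w + v) = fsize w + fsize v"
  by (simp add: fsize_def)

lemma nverts_Node: "nverts (Node ts) = Suc (fsize ts)"
  by (simp add: fsize_def)

declare nverts.simps [simp del]

lemma fsize_eq_0_iff [simp]: "fsize w = 0 \<longleftrightarrow> w = {#}"
proof -
  have "nverts t > 0" for t
    by (cases t) (simp add: nverts_Node)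
  then show ?thesis
    by (induction w) auto
qed

lemma cop_graded: "x \<in># cop w \<Longrightarrow> fsize (fst x) + fsize (snd x) = fsize w"
proof (induction w arbitrary: x rule: forest_induct)
  case empty
  then show ?case by (simp add: zero_prod_def)
next
  case (union w v)
  from union.prems obtain a b where "a \<in># cop w" "b \<in># cop v" "x = a + b"
    by (auto simp: cop_union elim: mem_msumE)
  then show ?case using union.IH by fastforce
next
  case (node ts)
  then show ?case by (auto simp: cop_Node nverts_Node)
qed

lemma cop_right_trivial: "filter_mset (\<lambda>x. snd x = {#}) (cop w) = {#(w, {#})#}"
proof (induction w rule: forest_induct)
  case empty
  then show ?case by (simp add: zero_prod_def)
next
  case (union w v)
  then show ?case by (simp add: cop_union filter_msum)
next
  case (node ts)
  then show ?case by (simp add: cop_Node filter_mset_image_mset case_prod_beta)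
qed

lemma cop_left_trivial: "filter_mset (\<lambda>x. fst x = {#}) (cop w) = {#({#}, w)#}"
proof (induction w rule: forest_induct)
  case empty
  then show ?case by (simp add: zero_prod_def)
next
  case (union w v)
  then show ?case by (simp add: cop_union filter_msum)
next
  case (node ts)
  then show ?case by (simp add: cop_Node filter_mset_image_mset case_prod_beta)
qed

text \<open>The two iterated coproducts \<open>(\<Delta> \<otimes> id) \<Delta>\<close> and \<open>(id \<otimes> \<Delta>) \<Delta>\<close> as multisets of triples:
  each term \<open>x\<^sub>1 \<otimes> x\<^sub>2\<close> of \<open>\<Delta> w\<close> is expanded by applying \<open>\<Delta>\<close> to its left or right factor.\<close>
definition expand_left :: "forest \<times> forest \<Rightarrow> (forest \<times> forest \<times> forest) multiset" where
  "expand_left x = image_mset (\<lambda>y. (fst y, snd y, snd x)) (cop (fst x))"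

definition expand_right :: "forest \<times> forest \<Rightarrow> (forest \<times> forest \<times> forest) multiset" where
  "expand_right x = image_mset (\<lambda>y. (fst x, fst y, snd y)) (cop (snd x))"

definition cop3_left :: "forest \<Rightarrow> (forest \<times> forest \<times> forest) multiset" where
  "cop3_left w = (\<Sum>x\<in>#cop w. expand_left x)"

definition cop3_right :: "forest \<Rightarrow> (forest \<times> forest \<times> forest) multiset" where
  "cop3_right w = (\<Sum>x\<in>#cop w. expand_right x)"

lemma cop3_left_union: "cop3_left (w + v) = msum (cop3_left w) (cop3_left v)"
proof -
  have "expand_left (x + y) = msum (expand_left x) (expand_left y)" for x y
    unfolding expand_left_def by (simp add: cop_union, rule image_msum) simp
  then show ?thesis
    unfolding cop3_left_def cop_union by (rule bind_msum)
qed

lemma cop3_right_union: "cop3_right (w + v) = msum (cop3_right w) (cop3_right v)"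
proof -
  have "expand_right (x + y) = msum (expand_right x) (expand_right y)" for x y
    unfolding expand_right_def by (simp add: cop_union, rule image_msum) simp
  then show ?thesis
    unfolding cop3_right_def cop_union by (rule bind_msum)
qed

lemma cop3_Node:
  fixes ts :: forest
  defines "middle \<equiv> image_mset (\<lambda>x. (fst x, {#Node (snd x)#}, {#})) (cop ts)"
    and "graft \<equiv> \<lambda>(x, y, z). (x, y, {#Node z#})"
  shows "cop3_left {#Node ts#} = add_mset ({#Node ts#}, {#}, {#}) (middle + image_mset graft (cop3_left ts))"
    and "cop3_right {#Node ts#} = add_mset ({#Node ts#}, {#}, {#}) (middle + image_mset graft (cop3_right ts))"
proof -
  have "expand_left ({#Node ts#}, {#}) = add_mset ({#Node ts#}, {#}, {#}) middle"
    by (simp add: middle_def expand_left_def cop_Node image_mset.compositionality o_def case_prod_beta)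
  moreover have "(\<Sum>x\<in>#cop ts. expand_left (fst x, {#Node (snd x)#})) = image_mset graft (cop3_left ts)"
    by (simp add: graft_def cop3_left_def expand_left_def image_mset_sum_mset image_mset.compositionality o_def)
  ultimately show "cop3_left {#Node ts#} = add_mset ({#Node ts#}, {#}, {#}) (middle + image_mset graft (cop3_left ts))"
    by (simp add: cop3_left_def cop_Node image_mset.compositionality o_def case_prod_beta)
  have "expand_right ({#Node ts#}, {#}) = {#({#Node ts#}, {#}, {#})#}"
    by (simp add: expand_right_def zero_prod_def)
  moreover have "(\<Sum>x\<in>#cop ts. expand_right (fst x, {#Node (snd x)#})) = middle + image_mset graft (cop3_right ts)"
    by (simp add: middle_def graft_def cop3_right_def expand_right_def cop_Node image_mset_sum_mset
        image_mset.compositionality o_def case_prod_beta sum_mset_add_mset)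
  ultimately show "cop3_right {#Node ts#} = add_mset ({#Node ts#}, {#}, {#}) (middle + image_mset graft (cop3_right ts))"
    by (simp add: cop3_right_def cop_Node image_mset.compositionality o_def case_prod_beta)
qed

theorem coassociativity: "cop3_left w = cop3_right w"
proof (induction w rule: forest_induct)
  case empty
  then show ?case by (simp add: cop3_left_def cop3_right_def expand_left_def expand_right_def zero_prod_def)
next
  case (union w v)
  then show ?case by (simp add: cop3_left_union cop3_right_union)
next
  case (node ts)
  then show ?case by (simp add: cop3_Node)
qed

section \<open>The convolution algebra\<close>

lemma conv_sweedler: "conv \<alpha> \<beta> w = (\<Sum>x\<in>#cop w. \<alpha> (fst x) * \<beta> (snd x))"
  unfolding conv_def by (intro arg_cong[where f = sum_mset] image_mset_cong) auto

lemma conv_cop3_left: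
  "conv (conv \<alpha> \<beta>) \<gamma> w = (\<Sum>x\<in>#cop3_left w. \<alpha> (fst x) * \<beta> (fst (snd x)) * \<gamma> (snd (snd x)))"
  unfolding cop3_left_def sum_mset_bind conv_sweedler expand_left_def
  by (intro arg_cong[where f = sum_mset] image_mset_cong)
    (simp add: sum_mset_distrib_right image_mset.compositionality o_def)

lemma conv_cop3_right:
  "conv \<alpha> (conv \<beta> \<gamma>) w = (\<Sum>x\<in>#cop3_right w. \<alpha> (fst x) * \<beta> (fst (snd x)) * \<gamma> (snd (snd x)))"
  unfolding cop3_right_def sum_mset_bind conv_sweedler expand_right_def
  by (intro arg_cong[where f = sum_mset] image_mset_cong)
    (simp add: sum_mset_distrib_left image_mset.compositionality o_def mult.assoc)

theorem conv_assoc: "conv (conv \<alpha> \<beta>) \<gamma> = conv \<alpha> (conv \<beta> \<gamma>)"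
  by (rule ext) (simp add: conv_cop3_left conv_cop3_right coassociativity)

lemma counit_empty [simp]: "counit {#} = 1"
  by (simp add: counit_def)

text \<open>Only the term \<open>1 \<otimes> w\<close> (resp. \<open>w \<otimes> 1\<close>) survives the counit, so \<open>counit\<close> is the unit.\<close>
lemma conv_counit_left [simp]: "conv counit \<alpha> = \<alpha>"
proof
  fix w
  have vanish: "(\<Sum>x\<in>#filter_mset (\<lambda>x. fst x \<noteq> {#}) (cop w). counit (fst x) * \<alpha> (snd x)) = 0"
    by (rule sum_mset.neutral) (auto simp: counit_def)
  have "conv counit \<alpha> w =
      (\<Sum>x\<in>#filter_mset (\<lambda>x. fst x = {#}) (cop w). counit (fst x) * \<alpha> (snd x)) +
      (\<Sum>x\<in>#filter_mset (\<lambda>x. fst x \<noteq> {#}) (cop w). counit (fst x) * \<alpha> (snd x))"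
    unfolding conv_sweedler by (rule sum_mset_filter_split)
  also have "\<dots> = \<alpha> w"
    by (simp add: vanish cop_left_trivial)
  finally show "conv counit \<alpha> w = \<alpha> w" .
qed

lemma conv_counit_right [simp]: "conv \<alpha> counit = \<alpha>"
proof
  fix w
  have vanish: "(\<Sum>x\<in>#filter_mset (\<lambda>x. snd x \<noteq> {#}) (cop w). \<alpha> (fst x) * counit (snd x)) = 0"
    by (rule sum_mset.neutral) (auto simp: counit_def)
  have "conv \<alpha> counit w =
      (\<Sum>x\<in>#filter_mset (\<lambda>x. snd x = {#}) (cop w). \<alpha> (fst x) * counit (snd x)) +
      (\<Sum>x\<in>#filter_mset (\<lambda>x. snd x \<noteq> {#}) (cop w). \<alpha> (fst x) * counit (snd x))"
    unfolding conv_sweedler by (rule sum_mset_filter_split)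
  also have "\<dots> = \<alpha> w"
    by (simp add: vanish cop_right_trivial)
  finally show "conv \<alpha> counit w = \<alpha> w" .
qed

text \<open>Apart from \<open>w \<otimes> 1\<close> and \<open>1 \<otimes> w\<close>, every term of \<open>\<Delta> w\<close> has both factors smaller
  than \<open>w\<close>; this makes the defining recursions of left and right inverses well founded.\<close>
lemma cop_fst_smaller: "x \<in># cop w \<Longrightarrow> snd x \<noteq> {#} \<Longrightarrow> fsize (fst x) < fsize w"
  using cop_graded[of x w] fsize_eq_0_iff[of "snd x"] by linarith

lemma cop_snd_smaller: "x \<in># cop w \<Longrightarrow> fst x \<noteq> {#} \<Longrightarrow> fsize (snd x) < fsize w"
  using cop_graded[of x w] fsize_eq_0_iff[of "fst x"] by linarith

text \<open>Left and right inverses, obtained by solving \<open>\<psi> \<star> X = \<epsilon>\<close> resp. \<open>X \<star> \<psi> = \<epsilon>\<close> for \<open>\<psi>(w)\<close>,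
  using \<open>X 1 = 1\<close>.\<close>
function linv :: "(forest \<Rightarrow> 'a::comm_ring_1) \<Rightarrow> forest \<Rightarrow> 'a" where
  "linv X w = counit w -
     (\<Sum>x\<in>#filter_mset (\<lambda>x. snd x \<noteq> {#}) (cop w). linv X (fst x) * X (snd x))"
  by auto
termination
  by (relation "Wellfounded.measure (\<lambda>(X, w). fsize w)") (auto intro: cop_fst_smaller)

function rinv :: "(forest \<Rightarrow> 'a::comm_ring_1) \<Rightarrow> forest \<Rightarrow> 'a" where
  "rinv X w = counit w -
     (\<Sum>x\<in>#filter_mset (\<lambda>x. fst x \<noteq> {#}) (cop w). X (fst x) * rinv X (snd x))"
  by auto
termination
  by (relation "Wellfounded.measure (\<lambda>(X, w). fsize w)") (auto intro: cop_snd_smaller)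

declare linv.simps [simp del] rinv.simps [simp del]

lemma linv_conv:
  assumes "X {#} = (1::'a::comm_ring_1)"
  shows "conv (linv X) X = counit"
proof
  fix w
  show "conv (linv X) X w = counit w"
    unfolding conv_sweedler
    by (subst sum_mset_filter_split[where P = "\<lambda>x. snd x = {#}"])
      (simp add: cop_right_trivial assms linv.simps[of X w])
qed

lemma conv_rinv:
  assumes "X {#} = (1::'a::comm_ring_1)"
  shows "conv X (rinv X) = counit"
proof
  fix w
  show "conv X (rinv X) w = counit w"
    unfolding conv_sweedler
    by (subst sum_mset_filter_split[where P = "\<lambda>x. fst x = {#}"])
      (simp add: cop_left_trivial assms rinv.simps[of X w])
qed

lemma left_inverse_unique:
  assumes "X {#} = (1::'a::comm_ring_1)" "conv \<psi> X = counit"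
  shows "\<psi> = rinv X"
proof -
  have "\<psi> = conv \<psi> (conv X (rinv X))"
    by (simp add: conv_rinv assms(1))
  also have "\<dots> = rinv X"
    by (simp add: conv_assoc[symmetric] assms)
  finally show ?thesis .
qed

theorem conv_inv:
  assumes "X {#} = (1::'a::comm_ring_1)"
  shows conv_inv_eq_rinv: "conv_inv X = rinv X"
    and conv_inv_left: "conv (conv_inv X) X = counit"
    and conv_inv_right: "conv X (conv_inv X) = counit"
proof -
  have left: "conv (linv X) X = counit"
    using assms by (rule linv_conv)
  show eq: "conv_inv X = rinv X"
    unfolding conv_inv_def
  proof (rule the_equality)
    show "conv (rinv X) X = counit"
      using left left_inverse_unique[where X = X, OF assms left] by simp
  qed (rule left_inverse_unique[where X = X, OF assms])
  show "conv (conv_inv X) X = counit"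
    using eq left left_inverse_unique[where X = X, OF assms left] by simp
  show "conv X (conv_inv X) = counit"
    using eq conv_rinv[where X = X, OF assms] by simp
qed

section \<open>Twisting by the grading\<close>

text \<open>The twist \<open>\<theta>\<^sub>c \<psi> (w) = c(|w|) \<psi>(w)\<close> by a monoid homomorphism \<open>c : (\<nat>, +) \<rightarrow> (A, \<cdot>)\<close>
  is an endomorphism of the convolution algebra, since \<open>\<Delta>\<close> is graded.\<close>
definition twist :: "(nat \<Rightarrow> 'a) \<Rightarrow> (forest \<Rightarrow> 'a::comm_semiring_1) \<Rightarrow> forest \<Rightarrow> 'a" where
  "twist c \<psi> w = c (fsize w) * \<psi> w"

lemma twist_conv:
  assumes c_hom: "\<And>m n. c (m + n) = c m * c n"
  shows "twist c (conv \<alpha> \<beta>) = conv (twist c \<alpha>) (twist c \<beta>)"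
proof
  fix w
  have "c (fsize (fst x)) * \<alpha> (fst x) * (c (fsize (snd x)) * \<beta> (snd x)) =
      c (fsize w) * (\<alpha> (fst x) * \<beta> (snd x))" if "x \<in># cop w" for x
    using cop_graded[OF that] c_hom[of "fsize (fst x)" "fsize (snd x)"] by (simp add: ac_simps)
  then show "twist c (conv \<alpha> \<beta>) w = conv (twist c \<alpha>) (twist c \<beta>) w"
    unfolding twist_def conv_sweedler sum_mset_distrib_left
    by (intro arg_cong[where f = sum_mset] image_mset_cong) simp
qed

lemma twist_counit: "c 0 = 1 \<Longrightarrow> twist c counit = counit"
  by (auto simp: twist_def counit_def fun_eq_iff)

lemma twist_conv_inv:
  assumes c_hom: "\<And>m n. c (m + n) = c m * c n" and "c 0 = 1" and "X {#} = (1::'a::comm_ring_1)"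
  shows "conv_inv (twist c X) = twist c (conv_inv X)"
proof -
  have twisted_unit: "twist c X {#} = 1"
    using assms by (simp add: twist_def)
  have "conv (twist c (conv_inv X)) (twist c X) = counit"
    by (simp add: twist_conv[OF c_hom, symmetric] conv_inv_left assms twist_counit)
  then have "twist c (conv_inv X) = rinv (twist c X)"
    by (rule left_inverse_unique[where X = "twist c X", OF twisted_unit])
  then show ?thesis
    by (simp add: conv_inv_eq_rinv[where X = "twist c X", OF twisted_unit])
qed

section \<open>The scaling law of the regularized characters\<close>

definition dilation :: "complex \<Rightarrow> real \<Rightarrow> nat \<Rightarrow> complex" where
  "dilation z t n = exp (- z * of_nat n * of_real t)"

lemma dilation_add: "dilation z t (m + n) = dilation z t m * dilation z t n"
  by (simp add: dilation_def exp_add[symmetric] algebra_simps)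

lemma dilation_0: "dilation z t 0 = 1"
  by (simp add: dilation_def)

lemma twist_dilation_twist: "twist (dilation z a) (twist (dilation z b) \<psi>) = twist (dilation z (a + b)) \<psi>"
  by (simp add: fun_eq_iff twist_def dilation_def exp_add[symmetric] algebra_simps)

lemma phi_empty: "phi F s z {#} = 1"
  by (simp add: phi_def fsubsizes_def)

lemma phi_rescale:
  assumes "s > 0"
  shows "phi F (s * exp t) z = twist (dilation z t) (phi F s z)"
proof
  fix w
  have "ln (s * exp t) = ln s + t"
    using assms by (simp add: ln_mult)
  then show "phi F (s * exp t) z w = twist (dilation z t) (phi F s z) w"
    by (simp add: phi_def twist_def dilation_def exp_add[symmetric] algebra_simps)
qed

text \<open>With \<open>\<phi>\<^sub>t = \<theta>\<^sub>t \<phi>\<^sub>\<mu>\<close>:  \<open>\<phi>\<^sub>R\<^sub>,\<^sub>a \<star> \<theta>\<^sub>a(\<phi>\<^sub>\<mu>\<^sup>-\<^sup>1 \<star> \<phi>\<^sub>b) = \<phi>\<^sub>\<mu>\<^sup>-\<^sup>1 \<star> \<phi>\<^sub>a \<star> \<phi>\<^sub>a\<^sup>-\<^sup>1 \<star> \<phi>\<^sub>a\<^sub>+\<^sub>b = \<phi>\<^sub>R\<^sub>,\<^sub>a\<^sub>+\<^sub>b\<close>.\<close>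
theorem phiR_group_law:
  assumes "\<mu> > 0"
  shows "conv (phiR F \<mu> (\<mu> * exp a) z) (twist (dilation z a) (phiR F \<mu> (\<mu> * exp b) z)) =
    phiR F \<mu> (\<mu> * exp (a + b)) z"
proof -
  let ?Y = "phi F \<mu> z" and ?\<theta> = "twist (dilation z a)"
  have unit: "?Y {#} = 1" and twisted_unit: "?\<theta> ?Y {#} = 1"
    by (simp_all add: phi_empty twist_def dilation_def)
  have "?\<theta> (phiR F \<mu> (\<mu> * exp b) z) = conv (conv_inv (?\<theta> ?Y)) (twist (dilation z (a + b)) ?Y)"
    unfolding phiR_def phi_rescale[OF assms] twist_conv[OF dilation_add] twist_dilation_twist
      twist_conv_inv[where c = "dilation z a" and X = ?Y, OF dilation_add dilation_0 unit] ..
  then have "conv (phiR F \<mu> (\<mu> * exp a) z) (?\<theta> (phiR F \<mu> (\<mu> * exp b) z)) =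
      conv (conv_inv ?Y) (conv (conv (?\<theta> ?Y) (conv_inv (?\<theta> ?Y))) (twist (dilation z (a + b)) ?Y))"
    by (simp add: phiR_def phi_rescale[OF assms] conv_assoc)
  also have "\<dots> = phiR F \<mu> (\<mu> * exp (a + b)) z"
    by (simp add: conv_inv_right[where X = "?\<theta> ?Y", OF twisted_unit] phiR_def phi_rescale[OF assms])
  finally show ?thesis .
qed

section \<open>Passage to the limit\<close>

lemma tendsto_sum_mset:
  fixes g :: "'c \<Rightarrow> 'd \<Rightarrow> 'b::topological_comm_monoid_add"
  assumes "\<And>x. x \<in># M \<Longrightarrow> ((\<lambda>z. g z x) \<longlongrightarrow> l x) L"
  shows "((\<lambda>z. \<Sum>x\<in>#M. g z x) \<longlongrightarrow> (\<Sum>x\<in>#M. l x)) L"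
  using assms by (induction M) (auto intro!: tendsto_add)

text \<open>Convolution is continuous: it is a finite sum of products.\<close>
lemma tendsto_conv:
  fixes \<alpha> \<beta> :: "'c \<Rightarrow> forest \<Rightarrow> 'a::{real_normed_algebra, comm_semiring_1}"
  assumes "\<And>v. ((\<lambda>z. \<alpha> z v) \<longlongrightarrow> A v) L" and "\<And>v. ((\<lambda>z. \<beta> z v) \<longlongrightarrow> B v) L"
  shows "((\<lambda>z. conv (\<alpha> z) (\<beta> z) w) \<longlongrightarrow> conv A B w) L"
  unfolding conv_sweedler by (intro tendsto_sum_mset tendsto_mult assms)

lemma of_real_sum_mset: "of_real (\<Sum>x\<in>#M. f x) = (\<Sum>x\<in>#M. of_real (f x))"
  by (induction M) auto

lemma of_real_conv:
  "of_real (conv A B w) = conv (\<lambda>v. of_real (A v)) (\<lambda>v. of_real (B v)) w"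
  by (simp add: conv_sweedler of_real_sum_mset)

lemma tendsto_twist_dilation:
  assumes "((\<lambda>z. \<psi> z v) \<longlongrightarrow> l) (at 0)"
  shows "((\<lambda>z. twist (dilation z t) (\<psi> z) v) \<longlongrightarrow> l) (at 0)"
proof -
  have "((\<lambda>z. dilation z t (fsize v)) \<longlongrightarrow> exp (- 0 * of_nat (fsize v) * of_real t)) (at 0)"
    unfolding dilation_def by (intro tendsto_intros)
  from tendsto_mult[OF this assms] show ?thesis
    by (simp add: twist_def)
qed

theorem limit_polynomials_group_law:
  assumes "\<mu> > 0"
    and P: "\<And>w s. s > 0 \<Longrightarrow>
      ((\<lambda>z. phiR F \<mu> s z w) \<longlongrightarrow> complex_of_real (poly (P w) (ln (s / \<mu>)))) (at 0)"
  shows "conv (\<lambda>v. poly (P v) a) (\<lambda>v. poly (P v) b) w = poly (P w) (a + b)"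
proof -
  have P_exp: "((\<lambda>z. phiR F \<mu> (\<mu> * exp t) z v) \<longlongrightarrow> of_real (poly (P v) t)) (at 0)" for t v
    using P[of "\<mu> * exp t" v] \<open>\<mu> > 0\<close> by simp
  let ?G = "\<lambda>z. conv (phiR F \<mu> (\<mu> * exp a) z) (twist (dilation z a) (phiR F \<mu> (\<mu> * exp b) z)) w"
  have "(?G \<longlongrightarrow> of_real (conv (\<lambda>v. poly (P v) a) (\<lambda>v. poly (P v) b) w)) (at 0)"
    unfolding of_real_conv by (intro tendsto_conv P_exp tendsto_twist_dilation)
  moreover have "(?G \<longlongrightarrow> of_real (poly (P w) (a + b))) (at 0)"
    unfolding phiR_group_law[OF \<open>\<mu> > 0\<close>] by (rule P_exp)
  ultimately have "complex_of_real (conv (\<lambda>v. poly (P v) a) (\<lambda>v. poly (P v) b) w) =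
      of_real (poly (P w) (a + b))"
    by (rule tendsto_unique[rotated]) simp
  then show ?thesis
    by simp
qed

text \<open>The identity holds on the basis of forests, hence for the linear extensions to \<open>H\<^sub>R\<close>.\<close>
theorem mainTheorem9:
  fixes f :: "real \<Rightarrow> real" and F :: "complex \<Rightarrow> complex" and \<mu> :: real
    and P :: "forest \<Rightarrow> real poly"
  assumes "generic_model f F" and "\<mu> > 0"
    and P: "\<And>w s. s > 0 \<Longrightarrow>
              ((\<lambda>z. phiR F \<mu> s z w) \<longlongrightarrow> complex_of_real (poly (P w) (ln (s / \<mu>)))) (at 0)"
  shows "\<forall>a b :: real. \<forall>w :: forest \<Rightarrow>\<^sub>0 real.
           lin (conv (\<lambda>v. poly (P v) a) (\<lambda>v. poly (P v) b)) w = lin (\<lambda>v. poly (P v) (a + b)) w"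
proof (intro allI)
  fix a b :: real and w :: "forest \<Rightarrow>\<^sub>0 real"
  have "conv (\<lambda>v. poly (P v) a) (\<lambda>v. poly (P v) b) = (\<lambda>v. poly (P v) (a + b))"
    using limit_polynomials_group_law[OF \<open>\<mu> > 0\<close> P] by blast
  then show "lin (conv (\<lambda>v. poly (P v) a) (\<lambda>v. poly (P v) b)) w = lin (\<lambda>v. poly (P v) (a + b)) w"
    by simp
qed

end
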